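(* For every horizontal parallelogram $P$ with $\operatorname{height}(P)=1$ and $\operatorname{width}(P)\le 1$, there exists a box type $T$ such that a translate of $P$ is contained in $T$ and $\operatorname{area}(T)\le 6\operatorname{area}(P)$.
   Context: For a compact set $S\subset\mathbb R^2$, $\operatorname{width}(S)=\max_{p,q\in S}|x(p)-x(q)|$ and $\operatorname{height}(S)=\max_{p,q\in S}|y(p)-y(q)|$. A horizontal parallelogram is one with a pair of horizontal edges (its bottom and top edges). Box types: the $0$-dimensional (basic) box type $[\,]$ is a $2\times 1$ axis-parallel rectangle. Given a $d$-dimensional box type $T=[x_1,\dots,x_d]\in\{-1,0,+1\}^d$, which is a horizontal parallelogram of height $1$ with bottom edge $b$ and top edge $t$, partition $b$ into three equally long segments $b_{-1},b_0,b_{+1}$ (left to right) and likewise $t$ into $t_{-1},t_0,t_{+1}$; for $x_{d+1}\in\{-1,0,+1\}$ the $(d+1)$-dimensional box type $T\oplus[x_{d+1}]$ is the parallelogram with bottom edge $b_0$ and top edge $t_{x_{d+1}}$. A $d$-dimensional box type has horizontal edges of length $2\cdot 3^{-d}$. *)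

theory Defs
  imports "HOL-Analysis.Analysis"
begin

definition width :: "(real \<times> real) set \<Rightarrow> real" where
  "width S = (SUP p\<in>S. SUP q\<in>S. \<bar>fst p - fst q\<bar>)"

definition height :: "(real \<times> real) set \<Rightarrow> real" where
  "height S = (SUP p\<in>S. SUP q\<in>S. \<bar>snd p - snd q\<bar>)"

definition area :: "(real \<times> real) set \<Rightarrow> real" where
  "area S = measure lebesgue S"

definition hpar :: "real \<Rightarrow> real \<Rightarrow> real \<Rightarrow> real \<Rightarrow> real \<Rightarrow> (real \<times> real) set" where
  "hpar a y0 L s h = convex hull {(a, y0), (a + L, y0), (a + s, y0 + h), (a + s + L, y0 + h)}"

definition horizontal_parallelogram :: "(real \<times> real) set \<Rightarrow> bool" where
  "horizontal_parallelogram P \<longleftrightarrow> (\<exists>a y0 L s h. L > 0 \<and> h > 0 \<and> P = hpar a y0 L s h)"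

text \<open>A box type of height 1 is described by the triple (b, t, L):
  bottom edge [b, b+L] \<times> {0}, top edge [t, t+L] \<times> {1}.  The basic box type is
  the rectangle [0,2] \<times> [0,1] (a fixed representative; only translates matter).
  Refinement T \<oplus> [x]: bottom edge becomes the middle third b_0 of the bottom edge,
  top edge becomes the third t_x of the top edge.\<close>
definition box_step :: "real \<times> real \<times> real \<Rightarrow> int \<Rightarrow> real \<times> real \<times> real" where
  "box_step T x = (case T of (b, t, L) \<Rightarrow> (b + L / 3, t + (of_int x + 1) * L / 3, L / 3))"

definition box_params :: "int list \<Rightarrow> real \<times> real \<times> real" where
  "box_params xs = foldl box_step (0, 0, 2) xs"

definition box_type :: "int list \<Rightarrow> (real \<times> real) set" where
  "box_type xs = (case box_params xs of (b, t, L) \<Rightarrow> hpar b 0 L (t - b) 1)"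

definition is_box_type :: "(real \<times> real) set \<Rightarrow> bool" where
  "is_box_type T \<longleftrightarrow> (\<exists>xs. set xs \<subseteq> {-1, 0, 1} \<and> T = box_type xs)"

end

theory Submission
  imports Defs
begin

text \<open>Write the parallelogram as hpar a y0 L s 1, with bottom length L and slant s; its
  width is L + |s| \<le> 1 and its area is L.  Choose d with 3^-(d+1) < L \<le> 3^-d.  In the
  box type with digits x_1, ..., x_d the top edge is shifted against the bottom edge by
  \<Sum> x_i 2/3^i, and these balanced ternary sums approximate every s \<in> [-1,1] within 3^-d.
  A horizontal parallelogram with bottom length L and slant s fits, after translation, into
  one of the same height with bottom length L' and slant s' as soon as L + |s - s'| \<le> L'.
  Here L' = 2 \<cdot> 3^-d, which is less than 6 L.\<close>

definition hpar_region :: "real \<Rightarrow> real \<Rightarrow> real \<Rightarrow> real \<Rightarrow> real \<Rightarrow> (real \<times> real) set" where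
  "hpar_region a y0 L s h = {p. y0 \<le> snd p \<and> snd p \<le> y0 + h \<and>
     a * h + s * (snd p - y0) \<le> fst p * h \<and> fst p * h \<le> (a + L) * h + s * (snd p - y0)}"

lemma convex_hpar_region: "convex (hpar_region a y0 L s h)"
proof -
  have "hpar_region a y0 L s h = {p. inner (0, -1) p \<le> - y0} \<inter> {p. inner (0, 1) p \<le> y0 + h}
     \<inter> {p. inner (- h, s) p \<le> - a * h + s * y0} \<inter> {p. inner (h, - s) p \<le> (a + L) * h - s * y0}"
    by (auto simp: hpar_region_def inner_prod_def algebra_simps)
  then show ?thesis
    by (simp add: convex_Int convex_halfspace_le)
qed

lemma closed_hpar_region: "closed (hpar_region a y0 L s h)"
  unfolding hpar_region_def by (intro closed_Collect_conj closed_Collect_le continuous_intros)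

lemma hpar_region_memE:
  assumes "p \<in> hpar_region a y0 L s h" "h > 0"
  obtains t where "0 \<le> t" "t \<le> 1" "snd p = y0 + t * h" "a + s * t \<le> fst p" "fst p \<le> a + L + s * t"
proof
  define t where "t = (snd p - y0) / h"
  show "snd p = y0 + t * h"
    using assms(2) by (simp add: t_def)
  then have "h * (a + s * t) \<le> h * fst p" "h * fst p \<le> h * (a + L + s * t)"
    using assms(1) by (auto simp: hpar_region_def algebra_simps)
  then show "a + s * t \<le> fst p" "fst p \<le> a + L + s * t"
    using assms(2) by (simp_all add: mult_le_cancel_left_pos)
  show "0 \<le> t" "t \<le> 1"
    using assms by (auto simp: t_def hpar_region_def)
qed

lemma hpar_corners_mem:
  "(a, y0) \<in> hpar a y0 L s h" "(a + L, y0) \<in> hpar a y0 L s h"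
  "(a + s, y0 + h) \<in> hpar a y0 L s h" "(a + s + L, y0 + h) \<in> hpar a y0 L s h"
  unfolding hpar_def by (simp_all add: hull_inc)

lemma hpar_eq_region:
  assumes "h > 0" "L \<ge> 0"
  shows "hpar a y0 L s h = hpar_region a y0 L s h"
proof
  show "hpar a y0 L s h \<subseteq> hpar_region a y0 L s h"
    unfolding hpar_def
  proof (rule hull_minimal)
    show "{(a, y0), (a + L, y0), (a + s, y0 + h), (a + s + L, y0 + h)} \<subseteq> hpar_region a y0 L s h"
      using assms by (auto simp: hpar_region_def algebra_simps)
  qed (rule convex_hpar_region)
next
  let ?H = "hpar a y0 L s h"
  have "convex ?H"
    unfolding hpar_def by simp
  note segment = closed_segment_subset[OF _ _ this]
  show "hpar_region a y0 L s h \<subseteq> ?H"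
  proof
    fix p assume "p \<in> hpar_region a y0 L s h"
    then obtain t where t: "0 \<le> t" "t \<le> 1" "snd p = y0 + t * h"
      and x: "a + s * t \<le> fst p" "fst p \<le> a + L + s * t"
      using assms(1) by (rule hpar_region_memE)
    have left: "(a + s * t, snd p) \<in> ?H"
      using segment[OF hpar_corners_mem(1,3)] t by (force simp: in_segment algebra_simps)
    have right: "(a + L + s * t, snd p) \<in> ?H"
      using segment[OF hpar_corners_mem(2,4)] t by (force simp: in_segment algebra_simps)
    have "p \<in> closed_segment (a + s * t, snd p) (a + L + s * t, snd p)"
    proof (cases "L = 0")
      case True
      then show ?thesis
        using x by (cases p) auto
    next
      case False
      with assms(2) x show ?thesis
        unfolding in_segment
        by (intro exI[of _ "(fst p - (a + s * t)) / L"]) (cases p, auto simp: field_simps)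
    qed
    then show "p \<in> ?H"
      using segment[OF left right] by blast
  qed
qed

text \<open>Cavalieri: every horizontal section is an interval of length L.\<close>

lemma area_hpar:
  assumes "h > 0" "L \<ge> 0"
  shows "area (hpar a y0 L s h) = L * h"
proof -
  let ?S = "hpar_region a y0 L s h"
  have "?S \<in> sets borel"
    by (rule borel_closed[OF closed_hpar_region])
  then have S_sets: "?S \<in> sets (lborel \<Otimes>\<^sub>M lborel)"
    by (simp only: lborel_prod sets_lborel)
  have "(\<lambda>x. (x, y)) -` ?S =
      (if y0 \<le> y \<and> y \<le> y0 + h then {a + s * (y - y0) / h .. a + s * (y - y0) / h + L} else {})" for y
    using assms by (auto simp: hpar_region_def field_simps)
  then have slice: "emeasure lborel ((\<lambda>x. (x, y)) -` ?S) = ennreal L * indicator {y0..y0 + h} y" for y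
    using assms by (simp add: indicator_def)
  have "emeasure lborel ?S = emeasure (lborel \<Otimes>\<^sub>M lborel) ?S"
    by (simp add: lborel_prod)
  also have "\<dots> = (\<integral>\<^sup>+y. emeasure lborel ((\<lambda>x. (x, y)) -` ?S) \<partial>lborel)"
    by (rule lborel_pair.emeasure_pair_measure_alt2[OF S_sets])
  also have "\<dots> = ennreal (L * h)"
    using assms by (simp add: slice nn_integral_cmult_indicator ennreal_mult)
  finally show ?thesis
    using assms by (simp add: area_def hpar_eq_region measure_def \<open>?S \<in> sets borel\<close>)
qed

lemma cSUP2_le:
  fixes f :: "'a \<Rightarrow> 'a \<Rightarrow> 'b::conditionally_complete_lattice"
  assumes "S \<noteq> {}" "\<And>p q. p \<in> S \<Longrightarrow> q \<in> S \<Longrightarrow> f p q \<le> B"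
  shows "(SUP p\<in>S. SUP q\<in>S. f p q) \<le> B"
  using assms by (intro cSUP_least) auto

lemma cSUP2_upper:
  fixes f :: "'a \<Rightarrow> 'a \<Rightarrow> 'b::conditionally_complete_lattice"
  assumes "p \<in> S" "q \<in> S" "\<And>p q. p \<in> S \<Longrightarrow> q \<in> S \<Longrightarrow> f p q \<le> B"
  shows "f p q \<le> (SUP p\<in>S. SUP q\<in>S. f p q)"
proof (rule cSUP_upper2)
  show "bdd_above ((\<lambda>p. SUP q\<in>S. f p q) ` S)"
    using assms by (intro bdd_aboveI2[where M = B]) (auto intro!: cSUP_least)
  show "f p q \<le> (SUP q\<in>S. f p q)"
    using assms by (intro cSUP_upper bdd_aboveI2[where M = B]) auto
qed (fact assms(1))

lemma
  assumes "h > 0" "L \<ge> 0"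
  shows height_hpar: "height (hpar a y0 L s h) = h"
    and width_hpar: "width (hpar a y0 L s h) = L + \<bar>s\<bar>"
proof -
  let ?H = "hpar a y0 L s h"
  have params: "\<exists>t\<in>{0..1}. snd p = y0 + t * h \<and> a + s * t \<le> fst p \<and> fst p \<le> a + L + s * t"
    if "p \<in> ?H" for p
    using that assms by (auto simp: hpar_eq_region elim!: hpar_region_memE)
  have "\<bar>snd p - snd q\<bar> \<le> h \<and> \<bar>fst p - fst q\<bar> \<le> L + \<bar>s\<bar>" if pq: "p \<in> ?H" "q \<in> ?H" for p q
  proof -
    obtain t where "t \<in> {0..1}" "snd p = y0 + t * h" "a + s * t \<le> fst p" "fst p \<le> a + L + s * t"
      using params pq(1) by blast
    moreover obtain u where "u \<in> {0..1}" "snd q = y0 + u * h" "a + s * u \<le> fst q" "fst q \<le> a + L + s * u"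
      using params pq(2) by blast
    moreover have "\<bar>t - u\<bar> \<le> 1"
      using \<open>t \<in> {0..1}\<close> \<open>u \<in> {0..1}\<close> by auto
    then have "\<bar>(t - u) * h\<bar> \<le> h" "\<bar>s * (t - u)\<bar> \<le> \<bar>s\<bar>"
      using assms(1) by (simp_all add: abs_mult mult_left_le)
    ultimately show ?thesis
      by (auto simp: abs_le_iff left_diff_distrib right_diff_distrib)
  qed
  then have height_bound: "\<And>p q. p \<in> ?H \<Longrightarrow> q \<in> ?H \<Longrightarrow> \<bar>snd p - snd q\<bar> \<le> h"
    and width_bound: "\<And>p q. p \<in> ?H \<Longrightarrow> q \<in> ?H \<Longrightarrow> \<bar>fst p - fst q\<bar> \<le> L + \<bar>s\<bar>"
    by blast+
  have "height ?H \<le> h"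
    unfolding height_def using hpar_corners_mem(1) by (intro cSUP2_le[OF _ height_bound]) blast
  moreover have "\<bar>snd (a, y0) - snd (a + s, y0 + h)\<bar> \<le> height ?H"
    unfolding height_def by (rule cSUP2_upper[OF hpar_corners_mem(1,3) height_bound])
  ultimately show "height ?H = h"
    using assms by simp
  have "width ?H \<le> L + \<bar>s\<bar>"
    unfolding width_def using hpar_corners_mem(1) by (intro cSUP2_le[OF _ width_bound]) blast
  moreover have "\<bar>fst (a, y0) - fst (a + s + L, y0 + h)\<bar> \<le> width ?H"
    unfolding width_def by (rule cSUP2_upper[OF hpar_corners_mem(1,4) width_bound])
  moreover have "\<bar>fst (a + L, y0) - fst (a + s, y0 + h)\<bar> \<le> width ?H"
    unfolding width_def by (rule cSUP2_upper[OF hpar_corners_mem(2,3) width_bound])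
  ultimately show "width ?H = L + \<bar>s\<bar>"
    using assms by (auto simp: abs_if split: if_splits)
qed

lemma translate_hpar_subset_hpar:
  assumes "h > 0" "L \<ge> 0" "L + \<bar>s - s'\<bar> \<le> L'"
  shows "\<exists>v. (\<lambda>p. p + v) ` hpar a y0 L s h \<subseteq> hpar a' y0' L' s' h"
proof
  define v where "v = (a' + max 0 (s' - s) - a, y0' - y0)"
  have "L' \<ge> 0"
    using assms(2,3) by linarith
  have "(\<lambda>p. p + v) ` hpar a y0 L s h
      = convex hull ((\<lambda>p. v + p) ` {(a, y0), (a + L, y0), (a + s, y0 + h), (a + s + L, y0 + h)})"
    unfolding hpar_def convex_hull_translation by (simp add: add.commute)
  also have "\<dots> \<subseteq> hpar a' y0' L' s' h"
    unfolding hpar_eq_region[OF assms(1) \<open>L' \<ge> 0\<close>]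
  proof (rule hull_minimal)
    show "(\<lambda>p. v + p) ` {(a, y0), (a + L, y0), (a + s, y0 + h), (a + s + L, y0 + h)}
        \<subseteq> hpar_region a' y0' L' s' h"
      using assms by (auto simp: hpar_region_def v_def abs_le_iff max_def simp flip: distrib_right)
  qed (rule convex_hpar_region)
  finally show "(\<lambda>p. p + v) ` hpar a y0 L s h \<subseteq> hpar a' y0' L' s' h" .
qed

lemma box_params_snoc: "box_params (xs @ [x]) = box_step (box_params xs) x"
  by (simp add: box_params_def)

lemma box_edge_length: "snd (snd (box_params xs)) = 2 / 3 ^ length xs"
proof (induction xs rule: rev_induct)
  case (snoc x xs)
  then show ?case
    by (cases "box_params xs") (simp add: box_params_snoc box_step_def)
qed (simp add: box_params_def)

definition box_offset :: "int list \<Rightarrow> real" where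
  "box_offset xs = fst (snd (box_params xs)) - fst (box_params xs)"

lemma box_offset_snoc: "box_offset (xs @ [x]) = box_offset xs + of_int x * 2 / 3 ^ (length xs + 1)"
  using box_edge_length[of xs]
  by (cases "box_params xs") (simp add: box_offset_def box_params_snoc box_step_def field_simps)

lemma box_type_eq_hpar:
  "\<exists>b. box_type xs = hpar b 0 (2 / 3 ^ length xs) (box_offset xs) 1"
  using box_edge_length[of xs]
  by (cases "box_params xs") (auto simp: box_type_def box_offset_def)

lemma box_offset_approx:
  assumes "\<bar>s\<bar> \<le> 1"
  shows "\<exists>xs. length xs = d \<and> set xs \<subseteq> {-1, 0, 1} \<and> \<bar>s - box_offset xs\<bar> \<le> 1 / 3 ^ d"
proof (induction d)
  case 0
  show ?case
    using assms by (intro exI[of _ "[]"]) (simp add: box_offset_def box_params_def)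
next
  case (Suc d)
  then obtain xs where xs: "length xs = d" "set xs \<subseteq> {-1, 0, 1}" "\<bar>s - box_offset xs\<bar> \<le> 1 / 3 ^ d"
    by blast
  define q :: real where "q = 1 / 3 ^ (d + 1)"
  define r where "r = s - box_offset xs"
  define x :: int where "x = (if r > q then 1 else if r < - q then - 1 else 0)"
  have q: "1 / 3 ^ d = 3 * q" "q > 0"
    by (simp_all add: q_def)
  have "\<bar>r\<bar> \<le> 3 * q"
    using xs(3) q by (simp add: r_def)
  then have "\<bar>s - box_offset (xs @ [x])\<bar> \<le> q"
    using q by (simp add: box_offset_snoc xs(1) flip: q_def r_def) (auto simp: x_def r_def abs_le_iff)
  moreover have "set (xs @ [x]) \<subseteq> {-1, 0, 1}"
    using xs(2) by (auto simp: x_def)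
  ultimately show ?case
    using xs(1) by (intro exI[of _ "xs @ [x]"]) (simp add: q_def)
qed

lemma power3_inverse_bracket:
  assumes "0 < L" "L \<le> (1::real)"
  obtains d :: nat where "1 / 3 ^ (d + 1) < L" "L \<le> 1 / 3 ^ d"
proof -
  have ex: "\<exists>n::nat. (1 / 3 :: real) ^ n < L"
    using assms by (intro real_arch_pow_inv) auto
  define n where "n = (LEAST n::nat. (1 / 3 :: real) ^ n < L)"
  have n: "(1 / 3 :: real) ^ n < L"
    unfolding n_def by (rule LeastI_ex[OF ex])
  with assms obtain d where d: "n = Suc d"
    by (cases n) auto
  have "\<not> (1 / 3 :: real) ^ d < L"
    using not_less_Least[of d "\<lambda>n. (1 / 3 :: real) ^ n < L"] d n_def by auto
  with n d show ?thesis
    by (intro that) (auto simp: power_divide)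
qed

theorem lemma15:
  fixes P :: "(real \<times> real) set"
  assumes "horizontal_parallelogram P"
    and "height P = 1"
    and "width P \<le> 1"
  shows "\<exists>T v. is_box_type T \<and> (\<lambda>p. p + v) ` P \<subseteq> T \<and> area T \<le> 6 * area P"
proof -
  obtain a y0 L s h where "L > 0" "h > 0" and P: "P = hpar a y0 L s h"
    using assms(1) unfolding horizontal_parallelogram_def by blast
  with assms(2,3) have h: "h = 1" and width: "L + \<bar>s\<bar> \<le> 1"
    by (simp_all add: height_hpar width_hpar)
  then have "L \<le> 1" "\<bar>s\<bar> \<le> 1"
    using \<open>L > 0\<close> by linarith+
  obtain d where d: "1 / 3 ^ (d + 1) < L" "L \<le> 1 / 3 ^ d"
    using power3_inverse_bracket[OF \<open>L > 0\<close> \<open>L \<le> 1\<close>] .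
  obtain xs where xs: "length xs = d" "set xs \<subseteq> {-1, 0, 1}" "\<bar>s - box_offset xs\<bar> \<le> 1 / 3 ^ d"
    using box_offset_approx[OF \<open>\<bar>s\<bar> \<le> 1\<close>, of d] by blast
  obtain b where T: "box_type xs = hpar b 0 (2 / 3 ^ d) (box_offset xs) 1"
    using box_type_eq_hpar xs(1) by blast
  have "is_box_type (box_type xs)"
    using xs(2) by (auto simp: is_box_type_def)
  moreover obtain v where "(\<lambda>p. p + v) ` P \<subseteq> box_type xs"
    using translate_hpar_subset_hpar[of 1 L s "box_offset xs" "2 / 3 ^ d"] \<open>L > 0\<close> d(2) xs(3)
    unfolding P h T by fastforce
  moreover have "area (box_type xs) \<le> 6 * area P"
    using d(1) \<open>L > 0\<close> by (simp add: T P h area_hpar)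
  ultimately show ?thesis
    by blast
qed

end
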